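(* Let $G$ be a finite, simple, connected graph. Then $res_{wt}(G)=3$ if and only if $G$ is a cycle of odd order or $G$ is a path of order at least three.
   Context: $d(x,y)$ is the shortest-path distance. A set $W\subseteq V(G)$ is a resolving set if for every two distinct vertices $y,z$ there is $x\in W$ with $d(y,x)\ne d(z,x)$. A set $W$ is a weak total resolving set (WTR-set) if $W$ is resolving and, for every $w\in W$ and every $x\in V(G)\setminus W$, there is $w'\in W\setminus\{w\}$ with $d(x,w')\ne d(w,w')$. The weak total resolving number $res_{wt}(G)$ is the minimum positive integer $r$ such that every set of $r$ vertices of $G$ is a WTR-set for $G$. *)

theory Defs
  imports Main
begin

definition simple_graph :: "'a set \<Rightarrow> 'a set set \<Rightarrow> bool" where
  "simple_graph V E \<longleftrightarrow> finite V \<and>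
     (\<forall>e\<in>E. \<exists>u v. e = {u, v} \<and> u \<noteq> v \<and> u \<in> V \<and> v \<in> V)"

definition adj :: "'a set set \<Rightarrow> 'a \<Rightarrow> 'a \<Rightarrow> bool" where
  "adj E u v \<longleftrightarrow> {u, v} \<in> E"

definition walk_len :: "'a set set \<Rightarrow> nat \<Rightarrow> 'a \<Rightarrow> 'a \<Rightarrow> bool" where
  "walk_len E n u v \<longleftrightarrow> (\<exists>xs. length xs = Suc n \<and> xs ! 0 = u \<and> xs ! n = v \<and>
      (\<forall>i<n. adj E (xs ! i) (xs ! Suc i)))"

definition connected_graph :: "'a set \<Rightarrow> 'a set set \<Rightarrow> bool" where
  "connected_graph V E \<longleftrightarrow> V \<noteq> {} \<and> (\<forall>u\<in>V. \<forall>v\<in>V. \<exists>n. walk_len E n u v)"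

text \<open>Shortest-path distance (meaningful in a connected graph).\<close>
definition gdist :: "'a set set \<Rightarrow> 'a \<Rightarrow> 'a \<Rightarrow> nat" where
  "gdist E u v = (LEAST n. walk_len E n u v)"

definition resolving_set :: "'a set \<Rightarrow> 'a set set \<Rightarrow> 'a set \<Rightarrow> bool" where
  "resolving_set V E W \<longleftrightarrow> W \<subseteq> V \<and>
     (\<forall>y\<in>V. \<forall>z\<in>V. y \<noteq> z \<longrightarrow> (\<exists>x\<in>W. gdist E y x \<noteq> gdist E z x))"

definition WTR_set :: "'a set \<Rightarrow> 'a set set \<Rightarrow> 'a set \<Rightarrow> bool" where
  "WTR_set V E W \<longleftrightarrow> resolving_set V E W \<and>
     (\<forall>w\<in>W. \<forall>x\<in>V - W. \<exists>w'\<in>W - {w}. gdist E x w' \<noteq> gdist E w w')"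

definition res_wt :: "'a set \<Rightarrow> 'a set set \<Rightarrow> nat" where
  "res_wt V E = (LEAST r. 0 < r \<and> (\<forall>W. W \<subseteq> V \<and> card W = r \<longrightarrow> WTR_set V E W))"

definition is_cycle_graph :: "'a set \<Rightarrow> 'a set set \<Rightarrow> nat \<Rightarrow> bool" where
  "is_cycle_graph V E n \<longleftrightarrow> n \<ge> 3 \<and>
     (\<exists>f. bij_betw f {0..<n} V \<and> E = {{f i, f ((i + 1) mod n)} | i. i < n})"

definition is_path_graph :: "'a set \<Rightarrow> 'a set set \<Rightarrow> nat \<Rightarrow> bool" where
  "is_path_graph V E n \<longleftrightarrow>
     (\<exists>f. bij_betw f {0..<n} V \<and> E = {{f i, f (i + 1)} | i. i + 1 < n})"

end

theory Submission
  imports Defs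
begin

text \<open>
  If \<open>W = {w, a, b}\<close>, a vertex \<open>x \<notin> W\<close> is told apart from \<open>w\<close> by \<open>W - {w}\<close> exactly when the pair
  \<open>{a, b}\<close> distinguishes \<open>x\<close> and \<open>w\<close>; hence every 3-set is a WTR-set iff every pair of distinct
  vertices resolves \<open>G\<close>, and \<open>res\<^sub>w\<^sub>t(G) = 3\<close> means that \<open>G\<close> is pair-resolving and has at least
  three vertices. A pair-resolving graph has maximum degree two: three neighbours of \<open>v\<close> are all at
  distance 1 from \<open>v\<close>, so the pair \<open>{v, u\<^sub>i}\<close> can only separate \<open>u\<^sub>j, u\<^sub>k\<close> if exactly one of them is
  adjacent to \<open>u\<^sub>i\<close>, and this cannot hold for all three choices of \<open>i\<close>. A connected graph of maximum
  degree two is a path or a cycle (a longest path already contains every vertex). Finally, two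
  distinct vertices equidistant from both \<open>a\<close> and \<open>b\<close> would be reflections of each other about both
  \<open>a\<close> and \<open>b\<close>; on a path this forces \<open>a = b\<close>, and on a cycle \<open>2a \<equiv> 2b (mod n)\<close>, impossible for odd
  \<open>n\<close> but realised in even cycles by the neighbours of a vertex and its antipode.
\<close>

section \<open>Walks and distances\<close>

lemma adj_sym: "adj E u v = adj E v u"
  by (simp add: adj_def insert_commute)

lemma adj_simple_graphD: "simple_graph V E \<Longrightarrow> adj E u v \<Longrightarrow> u \<in> V \<and> v \<in> V \<and> u \<noteq> v"
  unfolding simple_graph_def adj_def by (fastforce simp: doubleton_eq_iff)

lemma walk_len_0_iff: "walk_len E 0 u v \<longleftrightarrow> u = v"
proof
  show "walk_len E 0 u v \<Longrightarrow> u = v" unfolding walk_len_def by auto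
  show "u = v \<Longrightarrow> walk_len E 0 u v" unfolding walk_len_def by (intro exI[of _ "[v]"]) simp
qed

lemma walk_len_snoc:
  assumes "walk_len E n u v" "adj E v w"
  shows "walk_len E (Suc n) u w"
proof -
  obtain xs where xs: "length xs = Suc n" "xs ! 0 = u" "xs ! n = v"
    "\<forall>i<n. adj E (xs ! i) (xs ! Suc i)" using assms(1) unfolding walk_len_def by blast
  have "adj E ((xs @ [w]) ! i) ((xs @ [w]) ! Suc i)" if "i < Suc n" for i
  proof (cases "i = n")
    case False
    with that xs show ?thesis by (simp add: nth_append)
  qed (use xs assms(2) in \<open>simp add: nth_append\<close>)
  moreover have "(xs @ [w]) ! 0 = u" "(xs @ [w]) ! Suc n = w" using xs by (simp_all add: nth_append)
  ultimately show ?thesis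
    unfolding walk_len_def using xs by (intro exI[of _ "xs @ [w]"]) simp
qed

lemma walk_len_rev:
  assumes "walk_len E n u v"
  shows "walk_len E n v u"
proof -
  obtain xs where xs: "length xs = Suc n" "xs ! 0 = u" "xs ! n = v"
    "\<forall>i<n. adj E (xs ! i) (xs ! Suc i)" using assms unfolding walk_len_def by blast
  have "adj E (rev xs ! i) (rev xs ! Suc i)" if "i < n" for i
  proof -
    have "adj E (xs ! (n - Suc i)) (xs ! Suc (n - Suc i))" using xs that by simp
    moreover have "Suc (n - Suc i) = n - i" using that by simp
    ultimately show ?thesis using xs that by (simp add: rev_nth adj_sym)
  qed
  moreover have "rev xs ! 0 = v" "rev xs ! n = u" using xs by (simp_all add: rev_nth)
  ultimately show ?thesis
    unfolding walk_len_def using xs by (intro exI[of _ "rev xs"]) simp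
qed

lemma walk_len_1_iff: "walk_len E 1 u v \<longleftrightarrow> adj E u v"
proof
  show "walk_len E 1 u v \<Longrightarrow> adj E u v" unfolding walk_len_def by force
  show "adj E u v \<Longrightarrow> walk_len E 1 u v"
    using walk_len_snoc[of E 0 u u v] walk_len_0_iff[of E u u] by simp
qed

lemma walk_len_lipschitz:
  assumes h: "\<And>u v. adj E u v \<Longrightarrow> h v \<le> h u + (1::nat)"
    and "walk_len E n u v"
  shows "h v \<le> h u + n"
proof -
  obtain xs where xs: "length xs = Suc n" "xs ! 0 = u" "xs ! n = v"
    "\<forall>i<n. adj E (xs ! i) (xs ! Suc i)" using assms(2) unfolding walk_len_def by blast
  have "h (xs ! i) \<le> h u + i" if "i \<le> n" for i
    using that
  proof (induction i)
    case (Suc i)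
    then have "h (xs ! Suc i) \<le> h (xs ! i) + 1" using xs h by simp
    with Suc show ?case by simp
  qed (use xs in simp)
  then show ?thesis using xs by auto
qed

lemma walk_len_gdist:
  "connected_graph V E \<Longrightarrow> u \<in> V \<Longrightarrow> v \<in> V \<Longrightarrow> walk_len E (gdist E u v) u v"
  unfolding gdist_def connected_graph_def by (metis LeastI_ex)

lemma gdist_le: "walk_len E n u v \<Longrightarrow> gdist E u v \<le> n"
  unfolding gdist_def by (rule Least_le)

lemma gdist_eqI:
  assumes "walk_len E d u v" and "\<And>m. walk_len E m u v \<Longrightarrow> d \<le> m"
  shows "gdist E u v = d"
  unfolding gdist_def using assms by (intro Least_equality) auto

lemma gdist_self: "gdist E u u = 0"
  using gdist_le[of E 0 u u] walk_len_0_iff[of E u u] by simp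

lemma gdist_eq_0_iff:
  "connected_graph V E \<Longrightarrow> u \<in> V \<Longrightarrow> v \<in> V \<Longrightarrow> gdist E u v = 0 \<longleftrightarrow> u = v"
  using walk_len_gdist[of V E u v] walk_len_0_iff gdist_self by metis

lemma gdist_eq_1_iff:
  assumes "connected_graph V E" "u \<in> V" "v \<in> V"
  shows "gdist E u v = 1 \<longleftrightarrow> adj E u v \<and> u \<noteq> v"
proof
  assume d: "gdist E u v = 1"
  then have "adj E u v" using walk_len_gdist[OF assms] walk_len_1_iff[THEN iffD1] by metis
  then show "adj E u v \<and> u \<noteq> v"
    using d gdist_eq_0_iff[OF assms] by auto
next
  assume "adj E u v \<and> u \<noteq> v"
  then have "gdist E u v \<le> 1" "gdist E u v \<noteq> 0"
    using gdist_le[OF walk_len_1_iff[THEN iffD2]] gdist_eq_0_iff[OF assms] by auto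
  then show "gdist E u v = 1" by simp
qed

lemma gdist_common_neighbour:
  assumes s: "simple_graph V E" and c: "connected_graph V E"
    and "adj E v u\<^sub>1" "adj E v u\<^sub>2" "u\<^sub>1 \<noteq> u\<^sub>2"
  shows "gdist E u\<^sub>1 u\<^sub>2 = (if adj E u\<^sub>1 u\<^sub>2 then 1 else 2)"
proof -
  have V: "u\<^sub>1 \<in> V" "u\<^sub>2 \<in> V" using adj_simple_graphD[OF s] assms(3,4) by auto
  have "adj E u\<^sub>1 v" using assms(3) adj_sym by metis
  then have "walk_len E 1 u\<^sub>1 v" by (rule walk_len_1_iff[THEN iffD2])
  then have "walk_len E 2 u\<^sub>1 u\<^sub>2"
    using walk_len_snoc[of E 1 u\<^sub>1 v u\<^sub>2] assms(4) by (simp add: numeral_2_eq_2)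
  then have "gdist E u\<^sub>1 u\<^sub>2 \<le> 2" by (rule gdist_le)
  moreover have "gdist E u\<^sub>1 u\<^sub>2 \<noteq> 0" using gdist_eq_0_iff[OF c V] assms(5) by simp
  moreover have "gdist E u\<^sub>1 u\<^sub>2 = 1 \<longleftrightarrow> adj E u\<^sub>1 u\<^sub>2" using gdist_eq_1_iff[OF c V] assms(5) by simp
  ultimately show ?thesis by auto
qed

section \<open>Pair-resolving graphs and the WTR number three\<close>

definition all_WTR_of_card :: "'a set \<Rightarrow> 'a set set \<Rightarrow> nat \<Rightarrow> bool" where
  "all_WTR_of_card V E r \<longleftrightarrow> (\<forall>W. W \<subseteq> V \<and> card W = r \<longrightarrow> WTR_set V E W)"

definition pair_resolving :: "'a set \<Rightarrow> 'a set set \<Rightarrow> bool" where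
  "pair_resolving V E \<longleftrightarrow> (\<forall>a\<in>V. \<forall>b\<in>V. a \<noteq> b \<longrightarrow> resolving_set V E {a, b})"

lemma pair_resolving_iff:
  "pair_resolving V E \<longleftrightarrow> (\<forall>a\<in>V. \<forall>b\<in>V. a \<noteq> b \<longrightarrow> (\<forall>y\<in>V. \<forall>z\<in>V. y \<noteq> z \<longrightarrow>
      gdist E y a \<noteq> gdist E z a \<or> gdist E y b \<noteq> gdist E z b))"
  unfolding pair_resolving_def resolving_set_def by auto

lemma pair_resolving_imp_all_WTR_of_card_3:
  assumes "pair_resolving V E"
  shows "all_WTR_of_card V E 3"
  unfolding all_WTR_of_card_def
proof (intro allI impI)
  fix W assume W: "W \<subseteq> V \<and> card W = 3"
  then obtain p q r where pqr: "W = {p, q, r}" "p \<noteq> q" "q \<noteq> r" "p \<noteq> r"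
    using card_3_iff by metis
  have "resolving_set V E W"
    unfolding resolving_set_def
  proof (intro conjI ballI impI)
    fix y z assume "y \<in> V" "z \<in> V" "y \<noteq> z"
    then have "gdist E y p \<noteq> gdist E z p \<or> gdist E y q \<noteq> gdist E z q"
      using assms pqr W unfolding pair_resolving_iff by auto
    then show "\<exists>x\<in>W. gdist E y x \<noteq> gdist E z x" using pqr by auto
  qed (use W in simp)
  moreover have "\<exists>w'\<in>W - {w}. gdist E x w' \<noteq> gdist E w w'" if "w \<in> W" "x \<in> V - W" for w x
  proof -
    obtain a b where ab: "a \<in> W - {w}" "b \<in> W - {w}" "a \<noteq> b"
      using \<open>w \<in> W\<close> pqr by auto
    have "x \<noteq> w" using that by auto
    then show ?thesis using assms ab that W unfolding pair_resolving_iff by blast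
  qed
  ultimately show "WTR_set V E W" unfolding WTR_set_def by blast
qed

lemma all_WTR_of_card_3_imp_pair_resolving:
  assumes c: "connected_graph V E" and all3: "all_WTR_of_card V E 3"
  shows "pair_resolving V E"
  unfolding pair_resolving_iff
proof (intro ballI impI)
  fix a b y z assume V: "a \<in> V" "b \<in> V" "y \<in> V" "z \<in> V" and "a \<noteq> b" "y \<noteq> z"
  show "gdist E y a \<noteq> gdist E z a \<or> gdist E y b \<noteq> gdist E z b"
  proof (rule ccontr)
    assume "\<not> ?thesis"
    then have eq: "gdist E y a = gdist E z a" "gdist E y b = gdist E z b" by auto
    then have ne: "y \<noteq> a" "y \<noteq> b" "z \<noteq> a" "z \<noteq> b"
      using gdist_eq_0_iff[OF c] gdist_self V \<open>y \<noteq> z\<close> by metis+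
    text \<open>In the 3-set \<open>{y, a, b}\<close> nothing separates the outside vertex \<open>z\<close> from \<open>y\<close>.\<close>
    have "WTR_set V E {y, a, b}"
      using all3 V ne \<open>a \<noteq> b\<close> unfolding all_WTR_of_card_def by auto
    then show False
      unfolding WTR_set_def using V ne eq \<open>y \<noteq> z\<close> by auto
  qed
qed

lemma all_WTR_of_card_3_iff:
  "connected_graph V E \<Longrightarrow> all_WTR_of_card V E 3 \<longleftrightarrow> pair_resolving V E"
  using all_WTR_of_card_3_imp_pair_resolving pair_resolving_imp_all_WTR_of_card_3 by blast

lemma all_WTR_of_card_card:
  assumes c: "connected_graph V E" and "finite V"
  shows "all_WTR_of_card V E (card V)"
proof -
  have "gdist E y y \<noteq> gdist E z y" if "y \<in> V" "z \<in> V" "y \<noteq> z" for y z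
    using that gdist_self gdist_eq_0_iff[OF c] by metis
  then have "resolving_set V E V"
    unfolding resolving_set_def by blast
  then show ?thesis
    using card_subset_eq[OF \<open>finite V\<close>] unfolding all_WTR_of_card_def WTR_set_def by auto
qed

lemma res_wt_eq_Least: "res_wt V E = (LEAST r. 0 < r \<and> all_WTR_of_card V E r)"
  unfolding res_wt_def all_WTR_of_card_def ..

lemma res_wt_eq_3D:
  assumes s: "simple_graph V E" and c: "connected_graph V E" and "res_wt V E = 3"
  shows "pair_resolving V E" "3 \<le> card V"
proof -
  have fin: "finite V" using s unfolding simple_graph_def by simp
  then have "0 < card V" using c unfolding connected_graph_def by auto
  then have ex: "0 < card V \<and> all_WTR_of_card V E (card V)"
    using all_WTR_of_card_card[OF c fin] by simp
  show "pair_resolving V E"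
    using LeastI[of "\<lambda>r. 0 < r \<and> all_WTR_of_card V E r", OF ex] assms(3) all_WTR_of_card_3_iff[OF c]
    unfolding res_wt_eq_Least by simp
  show "3 \<le> card V"
    using Least_le[of "\<lambda>r. 0 < r \<and> all_WTR_of_card V E r", OF ex] assms(3)
    unfolding res_wt_eq_Least by simp
qed

lemma res_wt_eq_3I:
  assumes s: "simple_graph V E" and c: "connected_graph V E" and pr: "pair_resolving V E"
    and ab: "adj E a b" and bc: "adj E b c" and "a \<noteq> c"
  shows "res_wt V E = 3"
proof -
  have V: "a \<in> V" "b \<in> V" "c \<in> V" "a \<noteq> b" "b \<noteq> c"
    using adj_simple_graphD[OF s ab] adj_simple_graphD[OF s bc] by auto
  have not1: "\<not> all_WTR_of_card V E 1"
  proof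
    assume "all_WTR_of_card V E 1"
    then have "WTR_set V E {a}" using V unfolding all_WTR_of_card_def by auto
    then show False using V unfolding WTR_set_def by auto
  qed
  have not2: "\<not> all_WTR_of_card V E 2"
  proof
    assume "all_WTR_of_card V E 2"
    then have "WTR_set V E {a, b}" using V unfolding all_WTR_of_card_def by auto
    then have "gdist E c b \<noteq> gdist E a b"
      unfolding WTR_set_def using V \<open>a \<noteq> c\<close> by auto
    moreover have "gdist E c b = 1" "gdist E a b = 1"
      using gdist_eq_1_iff[OF c] V ab bc adj_sym[of E b c] by auto
    ultimately show False by simp
  qed
  show ?thesis
    unfolding res_wt_eq_Least
  proof (rule Least_equality)
    show "0 < (3::nat) \<and> all_WTR_of_card V E 3" using pr all_WTR_of_card_3_iff[OF c] by simp
  next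
    fix r :: nat assume "0 < r \<and> all_WTR_of_card V E r"
    with not1 not2 have "r \<noteq> 1" "r \<noteq> 2" "0 < r" by auto
    then show "3 \<le> r" by linarith
  qed
qed

definition degree_at_most_two :: "'a set set \<Rightarrow> bool" where
  "degree_at_most_two E \<longleftrightarrow> (\<forall>v u\<^sub>1 u\<^sub>2 u\<^sub>3. adj E v u\<^sub>1 \<longrightarrow> adj E v u\<^sub>2 \<longrightarrow> adj E v u\<^sub>3 \<longrightarrow>
      u\<^sub>1 = u\<^sub>2 \<or> u\<^sub>1 = u\<^sub>3 \<or> u\<^sub>2 = u\<^sub>3)"

lemma pair_resolving_degree_at_most_two:
  assumes s: "simple_graph V E" and c: "connected_graph V E" and pr: "pair_resolving V E"
  shows "degree_at_most_two E"
  unfolding degree_at_most_two_def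
proof (intro allI impI)
  fix v u\<^sub>1 u\<^sub>2 u\<^sub>3 assume a: "adj E v u\<^sub>1" "adj E v u\<^sub>2" "adj E v u\<^sub>3"
  show "u\<^sub>1 = u\<^sub>2 \<or> u\<^sub>1 = u\<^sub>3 \<or> u\<^sub>2 = u\<^sub>3"
  proof (rule ccontr)
    assume "\<not> ?thesis"
    then have d: "u\<^sub>1 \<noteq> u\<^sub>2" "u\<^sub>1 \<noteq> u\<^sub>3" "u\<^sub>2 \<noteq> u\<^sub>3" by auto
    have at1: "gdist E u v = 1" if "adj E v u" for u
      using gdist_eq_1_iff[OF c] adj_simple_graphD[OF s that] that adj_sym[of E v u] by auto
    have separated: "adj E u\<^sub>j u\<^sub>i \<noteq> adj E u\<^sub>k u\<^sub>i"
      if "adj E v u\<^sub>i" "adj E v u\<^sub>j" "adj E v u\<^sub>k" "u\<^sub>i \<noteq> u\<^sub>j" "u\<^sub>i \<noteq> u\<^sub>k" "u\<^sub>j \<noteq> u\<^sub>k"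
      for u\<^sub>i u\<^sub>j u\<^sub>k
    proof -
      have V: "v \<in> V" "u\<^sub>i \<in> V" "u\<^sub>j \<in> V" "u\<^sub>k \<in> V" "v \<noteq> u\<^sub>i"
        using adj_simple_graphD[OF s] that(1-3) by blast+
      text \<open>The pair \<open>{v, u\<^sub>i}\<close> must separate \<open>u\<^sub>j\<close> and \<open>u\<^sub>k\<close>, which are both adjacent to \<open>v\<close>.\<close>
      have "gdist E u\<^sub>j v = gdist E u\<^sub>k v" using at1 that(2,3) by simp
      then have "gdist E u\<^sub>j u\<^sub>i \<noteq> gdist E u\<^sub>k u\<^sub>i"
        using pr[unfolded pair_resolving_iff, rule_format, of v u\<^sub>i u\<^sub>j u\<^sub>k] V \<open>u\<^sub>j \<noteq> u\<^sub>k\<close> by auto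
      then show ?thesis
        using gdist_common_neighbour[OF s c that(2,1)] gdist_common_neighbour[OF s c that(3,1)] that(4,5)
        by (auto split: if_splits)
    qed
    have "adj E u\<^sub>2 u\<^sub>1 \<noteq> adj E u\<^sub>3 u\<^sub>1" "adj E u\<^sub>1 u\<^sub>2 \<noteq> adj E u\<^sub>3 u\<^sub>2" "adj E u\<^sub>1 u\<^sub>3 \<noteq> adj E u\<^sub>2 u\<^sub>3"
      using separated[of u\<^sub>1 u\<^sub>2 u\<^sub>3] separated[of u\<^sub>2 u\<^sub>1 u\<^sub>3] separated[of u\<^sub>3 u\<^sub>1 u\<^sub>2] a d by auto
    then show False
      using adj_sym[of E u\<^sub>2 u\<^sub>1] adj_sym[of E u\<^sub>3 u\<^sub>1] adj_sym[of E u\<^sub>3 u\<^sub>2] by blast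
  qed
qed

section \<open>Paths and cycles\<close>

definition nat_dist :: "nat \<Rightarrow> nat \<Rightarrow> nat" where
  "nat_dist i j = (if i \<le> j then j - i else i - j)"

definition cycle_dist :: "nat \<Rightarrow> nat \<Rightarrow> nat \<Rightarrow> nat" where
  "cycle_dist n i j = min (nat_dist i j) (n - nat_dist i j)"

lemma nat_dist_eq_imp_midpoint: "nat_dist y a = nat_dist z a \<Longrightarrow> y \<noteq> z \<Longrightarrow> y + z = 2 * a"
  unfolding nat_dist_def by (cases "y \<le> a"; cases "z \<le> a"; simp; arith)

lemma nat_dist_resolves:
  "a \<noteq> b \<Longrightarrow> y \<noteq> z \<Longrightarrow> nat_dist y a \<noteq> nat_dist z a \<or> nat_dist y b \<noteq> nat_dist z b"
  using nat_dist_eq_imp_midpoint[of y a z] nat_dist_eq_imp_midpoint[of y b z] by auto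

lemma cycle_dist_eq_imp_midpoint:
  assumes "cycle_dist n y a = cycle_dist n z a" "y < n" "z < n" "a < n" "y \<noteq> z"
  shows "(y + z) mod n = 2 * a mod n"
proof -
  have "y + z = 2 * a \<or> y + z = 2 * a + n \<or> y + z + n = 2 * a"
    using assms unfolding cycle_dist_def nat_dist_def min_def
    by (cases "y \<le> a"; cases "z \<le> a"; simp split: if_splits; arith)
  then show ?thesis by (metis mod_add_self2)
qed

lemma odd_mod_double_eq_imp_eq:
  fixes n a b :: nat
  assumes "odd n" "a < n" "b < n" "2 * a mod n = 2 * b mod n"
  shows "a = b"
proof -
  have diff_eq_0: "b - a = 0" if "a \<le> b" "b < n" "2 * b mod n = 2 * a mod n" for a b
  proof (rule ccontr)
    assume "b - a \<noteq> 0"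
    have "2 * a \<le> 2 * b" using that(1) by simp
    then have "n dvd 2 * b - 2 * a" using mod_eq_dvd_iff_nat that(3) by blast
    then have "n dvd 2 * (b - a)" by (simp add: diff_mult_distrib2)
    moreover have "coprime n 2" using \<open>odd n\<close> by simp
    ultimately have "n dvd b - a" using coprime_dvd_mult_right_iff by blast
    then have "n \<le> b - a" using \<open>b - a \<noteq> 0\<close> by (simp add: dvd_imp_le)
    then show False using that(2) by linarith
  qed
  show ?thesis
  proof (cases "a \<le> b")
    case True
    then show ?thesis using diff_eq_0[OF True assms(3) assms(4)[symmetric]] by simp
  next
    case False
    then show ?thesis using diff_eq_0[OF _ assms(2,4)] by simp
  qed
qed

lemma cycle_dist_resolves_odd:
  assumes "odd n" "a < n" "b < n" "y < n" "z < n" "a \<noteq> b" "y \<noteq> z"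
  shows "cycle_dist n y a \<noteq> cycle_dist n z a \<or> cycle_dist n y b \<noteq> cycle_dist n z b"
proof (rule ccontr)
  assume "\<not> ?thesis"
  then have "(y + z) mod n = 2 * a mod n" "(y + z) mod n = 2 * b mod n"
    using cycle_dist_eq_imp_midpoint assms(2-5,7) by blast+
  then show False using odd_mod_double_eq_imp_eq[OF assms(1-3)] assms(6) by metis
qed

lemma cycle_dist_Suc_mod:
  assumes "i < n" "k < n"
  shows "cycle_dist n i ((k + 1) mod n) \<le> cycle_dist n i k + 1 \<and>
         cycle_dist n i k \<le> cycle_dist n i ((k + 1) mod n) + 1"
proof -
  have "(k + 1) mod n = (if k + 1 < n then k + 1 else 0)"
    using \<open>k < n\<close> by (cases "k + 1 = n") auto
  with assms show ?thesis
    unfolding cycle_dist_def nat_dist_def min_def by (cases "i \<le> k"; simp split: if_splits; arith)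
qed

locale vertex_enumeration =
  fixes V :: "'a set" and f :: "nat \<Rightarrow> 'a" and n :: nat
  assumes bij: "bij_betw f {0..<n} V"
begin

definition index :: "'a \<Rightarrow> nat" where
  "index v = inv_into {0..<n} f v"

lemma index_f: "i < n \<Longrightarrow> index (f i) = i"
  unfolding index_def using bij bij_betw_inv_into_left by fastforce

lemma ex_index: "v \<in> V \<Longrightarrow> \<exists>i<n. v = f i"
  using bij unfolding bij_betw_def by auto

lemma f_in_V: "i < n \<Longrightarrow> f i \<in> V"
  using bij unfolding bij_betw_def by auto

lemma f_eq_iff: "i < n \<Longrightarrow> j < n \<Longrightarrow> f i = f j \<longleftrightarrow> i = j"
  using bij unfolding bij_betw_def by (auto dest: inj_onD)

lemma pair_resolving_if_distances:
  assumes "\<And>i j. i < n \<Longrightarrow> j < n \<Longrightarrow> gdist E (f i) (f j) = D i j"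
    and "\<And>a b y z. a < n \<Longrightarrow> b < n \<Longrightarrow> y < n \<Longrightarrow> z < n \<Longrightarrow> a \<noteq> b \<Longrightarrow> y \<noteq> z \<Longrightarrow>
           D y a \<noteq> D z a \<or> D y b \<noteq> D z b"
  shows "pair_resolving V E"
  unfolding pair_resolving_iff
proof (intro ballI impI)
  fix a b y z assume "a \<in> V" "b \<in> V" "y \<in> V" "z \<in> V" "a \<noteq> b" "y \<noteq> z"
  then show "gdist E y a \<noteq> gdist E z a \<or> gdist E y b \<noteq> gdist E z b"
    using ex_index assms by metis
qed

end

locale path_enumeration = vertex_enumeration +
  fixes E :: "'a set set"
  assumes E_eq: "E = {{f i, f (i + 1)} | i. i + 1 < n}"
begin

lemma adj_Suc: "i + 1 < n \<Longrightarrow> adj E (f i) (f (i + 1))"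
  unfolding adj_def E_eq by blast

lemma adjE:
  assumes "adj E u v"
  obtains k where "k + 1 < n" "{u, v} = {f k, f (k + 1)}"
  using assms unfolding adj_def E_eq by auto

lemma walk_len_f: "i \<le> j \<Longrightarrow> j < n \<Longrightarrow> walk_len E (j - i) (f i) (f j)"
proof (induction j)
  case (Suc j)
  show ?case
  proof (cases "i = Suc j")
    case False
    then have "walk_len E (Suc (j - i)) (f i) (f (Suc j))"
      using Suc adj_Suc[of j] walk_len_snoc by simp
    then show ?thesis using False Suc.prems by (simp add: Suc_diff_le)
  qed (simp add: walk_len_0_iff)
qed (simp add: walk_len_0_iff)

lemma gdist_f: assumes "i < n" "j < n" shows "gdist E (f i) (f j) = nat_dist i j"
proof (rule gdist_eqI)
  show "walk_len E (nat_dist i j) (f i) (f j)"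
    using walk_len_f[of i j] walk_len_rev[OF walk_len_f[of j i]] assms
    unfolding nat_dist_def by (cases "i \<le> j") auto
next
  fix m assume walk: "walk_len E m (f i) (f j)"
  have step: "nat_dist i (index v) \<le> nat_dist i (index u) + 1" if "adj E u v" for u v
    using that by (rule adjE) (auto simp: doubleton_eq_iff index_f nat_dist_def)
  have "nat_dist i (index (f j)) \<le> nat_dist i (index (f i)) + m"
    by (rule walk_len_lipschitz[OF step walk])
  then show "nat_dist i j \<le> m" using index_f assms by (simp add: nat_dist_def)
qed

lemma pair_resolving: "pair_resolving V E"
  using pair_resolving_if_distances[OF gdist_f nat_dist_resolves] by blast

lemma res_wt_eq_3:
  assumes "simple_graph V E" "connected_graph V E" "3 \<le> n"
  shows "res_wt V E = 3"
  using res_wt_eq_3I[OF assms(1,2) pair_resolving, of "f 0" "f 1" "f 2"]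
    adj_Suc[of 0] adj_Suc[of 1] f_eq_iff[of 0 2] assms(3) by (simp add: numeral_2_eq_2)

end

locale cycle_enumeration = vertex_enumeration +
  fixes E :: "'a set set"
  assumes E_eq: "E = {{f i, f ((i + 1) mod n)} | i. i < n}"
    and three_le: "3 \<le> n"
begin

lemma adj_Suc_mod: "i < n \<Longrightarrow> adj E (f i) (f ((i + 1) mod n))"
  unfolding adj_def E_eq by blast

lemma adjE:
  assumes "adj E u v"
  obtains k where "k < n" "{u, v} = {f k, f ((k + 1) mod n)}"
  using assms unfolding adj_def E_eq by auto

lemma walk_len_f: "i < n \<Longrightarrow> walk_len E k (f i) (f ((i + k) mod n))"
proof (induction k)
  case (Suc k)
  have "adj E (f ((i + k) mod n)) (f (((i + k) mod n + 1) mod n))"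
    using adj_Suc_mod three_le by simp
  moreover have "((i + k) mod n + 1) mod n = (i + Suc k) mod n"
    by (simp add: mod_Suc_eq)
  ultimately show ?case using Suc walk_len_snoc by metis
qed (simp add: walk_len_0_iff)

lemma gdist_f: assumes "i < n" "j < n" shows "gdist E (f i) (f j) = cycle_dist n i j"
proof (rule gdist_eqI)
  have forward: "walk_len E (j - i) (f i) (f j)" "walk_len E (n - (j - i)) (f i) (f j)"
    if "i \<le> j" "j < n" for i j
  proof -
    show "walk_len E (j - i) (f i) (f j)" using walk_len_f[of i "j - i"] that by simp
    have "(j + (n - (j - i))) mod n = i" using that by simp
    then show "walk_len E (n - (j - i)) (f i) (f j)"
      using walk_len_rev[OF walk_len_f[of j "n - (j - i)"]] that by simp
  qed
  show "walk_len E (cycle_dist n i j) (f i) (f j)"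
  proof (cases "i \<le> j")
    case True
    then show ?thesis
      using forward[OF True assms(2)] unfolding cycle_dist_def nat_dist_def by (simp add: min_def)
  next
    case False
    then have "j \<le> i" by simp
    with False show ?thesis
      using walk_len_rev[OF forward(1)[OF \<open>j \<le> i\<close> assms(1)]]
        walk_len_rev[OF forward(2)[OF \<open>j \<le> i\<close> assms(1)]]
      unfolding cycle_dist_def nat_dist_def by (simp add: min_def)
  qed
next
  fix m assume walk: "walk_len E m (f i) (f j)"
  have step: "cycle_dist n i (index v) \<le> cycle_dist n i (index u) + 1" if "adj E u v" for u v
    using that
  proof (rule adjE)
    fix k assume k: "k < n" and "{u, v} = {f k, f ((k + 1) mod n)}"
    then consider "u = f k" "v = f ((k + 1) mod n)" | "u = f ((k + 1) mod n)" "v = f k"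
      by (auto simp: doubleton_eq_iff)
    moreover have "(k + 1) mod n < n" using three_le by simp
    ultimately show ?thesis
      using cycle_dist_Suc_mod[OF assms(1) k] index_f k by cases simp_all
  qed
  have "cycle_dist n i (index (f j)) \<le> cycle_dist n i (index (f i)) + m"
    by (rule walk_len_lipschitz[OF step walk])
  then show "cycle_dist n i j \<le> m" using index_f assms by (simp add: cycle_dist_def nat_dist_def)
qed

lemma pair_resolving_iff_odd: "pair_resolving V E \<longleftrightarrow> odd n"
proof
  assume "odd n"
  then show "pair_resolving V E"
    using pair_resolving_if_distances[OF gdist_f cycle_dist_resolves_odd] by blast
next
  assume pr: "pair_resolving V E"
  show "odd n"
  proof
    assume "even n"
    then obtain k where k: "n = 2 * k" by auto
    then have "2 \<le> k" using three_le by simp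
    text \<open>The two neighbours of \<open>f 0\<close> are equidistant from \<open>f 0\<close> and from its antipode \<open>f k\<close>.\<close>
    then have dist_eq: "cycle_dist n 1 0 = cycle_dist n (n - 1) 0" "cycle_dist n 1 k = cycle_dist n (n - 1) k"
      using k unfolding cycle_dist_def nat_dist_def by simp_all
    have idx: "0 < n" "1 < n" "k < n" "n - 1 < n" using k \<open>2 \<le> k\<close> by auto
    have "f 0 \<noteq> f k" "f 1 \<noteq> f (n - 1)"
      using f_eq_iff idx k \<open>2 \<le> k\<close> by simp_all
    then have "gdist E (f 1) (f 0) \<noteq> gdist E (f (n - 1)) (f 0) \<or>
               gdist E (f 1) (f k) \<noteq> gdist E (f (n - 1)) (f k)"
      using pr[unfolded pair_resolving_iff, rule_format, of "f 0" "f k" "f 1" "f (n - 1)"] f_in_V idx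
      by blast
    then show False using gdist_f idx dist_eq by simp
  qed
qed

lemma res_wt_eq_3:
  assumes "simple_graph V E" "connected_graph V E" "odd n"
  shows "res_wt V E = 3"
  using res_wt_eq_3I[OF assms(1,2) pair_resolving_iff_odd[THEN iffD2, OF assms(3)], of "f 0" "f 1" "f 2"]
    adj_Suc_mod[of 0] adj_Suc_mod[of 1] f_eq_iff[of 0 2] three_le by (simp add: numeral_2_eq_2)

end

lemma is_path_graph_enumeration: "is_path_graph V E n \<Longrightarrow> \<exists>f. path_enumeration V f n E"
  unfolding is_path_graph_def path_enumeration_def path_enumeration_axioms_def
    vertex_enumeration_def by blast

lemma is_cycle_graph_enumeration: "is_cycle_graph V E n \<Longrightarrow> \<exists>f. cycle_enumeration V f n E"
  unfolding is_cycle_graph_def cycle_enumeration_def cycle_enumeration_axioms_def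
    vertex_enumeration_def by blast

section \<open>Connected graphs of maximum degree two\<close>

definition simple_path :: "'a set \<Rightarrow> 'a set set \<Rightarrow> 'a list \<Rightarrow> bool" where
  "simple_path V E xs \<longleftrightarrow> xs \<noteq> [] \<and> distinct xs \<and> set xs \<subseteq> V \<and>
     (\<forall>i. Suc i < length xs \<longrightarrow> adj E (xs ! i) (xs ! Suc i))"

lemma simple_path_snoc:
  assumes "simple_path V E xs" "u \<in> V" "u \<notin> set xs" "adj E (last xs) u"
  shows "simple_path V E (xs @ [u])"
  unfolding simple_path_def
proof (intro conjI allI impI)
  fix i assume i: "Suc i < length (xs @ [u])"
  show "adj E ((xs @ [u]) ! i) ((xs @ [u]) ! Suc i)"
  proof (cases "Suc i < length xs")
    case True
    then show ?thesis using assms(1) unfolding simple_path_def by (simp add: nth_append)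
  next
    case False
    then have "Suc i = length xs" using i by simp
    moreover have "last xs = xs ! i"
      using \<open>Suc i = length xs\<close> by (cases xs rule: rev_cases) (auto simp: nth_append)
    ultimately show ?thesis using assms(4) by (simp add: nth_append)
  qed
qed (use assms in \<open>auto simp: simple_path_def\<close>)

lemma simple_path_Cons:
  assumes "simple_path V E xs" "u \<in> V" "u \<notin> set xs" "adj E u (hd xs)"
  shows "simple_path V E (u # xs)"
  using assms unfolding simple_path_def by (auto simp: hd_conv_nth nth_Cons split: nat.split)

lemma ex_longest_simple_path:
  assumes "finite V" "v \<in> V"
  shows "\<exists>xs. simple_path V E xs \<and> (\<forall>ys. simple_path V E ys \<longrightarrow> length ys \<le> length xs)"
proof -
  have "length ys < Suc (card V)" if "simple_path V E ys" for ys
    using that assms(1) card_mono distinct_card unfolding simple_path_def by (metis less_Suc_eq_le)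
  moreover have "simple_path V E [v]" using assms(2) unfolding simple_path_def by simp
  ultimately show ?thesis
    using Lattices_Big.ex_has_greatest_nat[of "simple_path V E" "[v]" length] by blast
qed

text \<open>A longest simple path in a connected graph of maximum degree two cannot be extended at
  its ends, and its inner vertices already have both neighbours on it; so it passes through every
  vertex, and the only possible extra edge joins its two ends.\<close>

locale longest_path =
  fixes V :: "'a set" and E :: "'a set set" and xs :: "'a list"
  assumes simple: "simple_graph V E" and connected: "connected_graph V E"
    and degree: "degree_at_most_two E"
    and path: "simple_path V E xs"
    and longest: "\<And>ys. simple_path V E ys \<Longrightarrow> length ys \<le> length xs"
begin

abbreviation L :: nat where "L \<equiv> length xs"

lemma L_pos: "0 < L"
  using path unfolding simple_path_def by simp

lemma adj_nth_Suc: "Suc k < L \<Longrightarrow> adj E (xs ! k) (xs ! Suc k)"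
  using path unfolding simple_path_def by auto

lemma nth_eq_iff: "i < L \<Longrightarrow> j < L \<Longrightarrow> xs ! i = xs ! j \<longleftrightarrow> i = j"
  using path nth_eq_iff_index_eq unfolding simple_path_def by blast

lemma adj_inner:
  assumes "0 < k" "Suc k < L" "adj E (xs ! k) u"
  shows "u = xs ! (k - 1) \<or> u = xs ! Suc k"
proof -
  have "Suc (k - 1) = k" using assms(1) by simp
  then have "adj E (xs ! (k - 1)) (xs ! k)" using adj_nth_Suc[of "k - 1"] assms(2) by simp
  then have before: "adj E (xs ! k) (xs ! (k - 1))" using adj_sym by metis
  have after: "adj E (xs ! k) (xs ! Suc k)" using adj_nth_Suc assms(2) .
  have "xs ! (k - 1) \<noteq> xs ! Suc k" using nth_eq_iff assms(1,2) by simp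
  then show ?thesis
    using degree[unfolded degree_at_most_two_def, rule_format, OF before after assms(3)] by blast
qed

lemma adj_in_set:
  assumes k: "k < L" and a: "adj E (xs ! k) u"
  shows "u \<in> set xs"
proof (rule ccontr)
  assume u: "u \<notin> set xs"
  have "u \<in> V" using adj_simple_graphD[OF simple a] by simp
  consider "k = L - 1" | "k = 0" | "0 < k" "Suc k < L" using k by linarith
  then show False
  proof cases
    case 1
    then have "last xs = xs ! k" using L_pos by (simp add: last_conv_nth)
    then have "simple_path V E (xs @ [u])"
      using simple_path_snoc[OF path \<open>u \<in> V\<close> u] a by simp
    then show False using longest[of "xs @ [u]"] by simp
  next
    case 2
    then have "hd xs = xs ! k" using L_pos by (simp add: hd_conv_nth)
    then have "simple_path V E (u # xs)"
      using simple_path_Cons[OF path \<open>u \<in> V\<close> u] a adj_sym by metis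
    then show False using longest[of "u # xs"] by simp
  next
    case 3
    then have "u = xs ! (k - 1) \<or> u = xs ! Suc k" using adj_inner a by blast
    then show False using u 3 k by auto
  qed
qed

lemma set_eq_V: "set xs = V"
proof
  show "set xs \<subseteq> V" using path unfolding simple_path_def by simp
next
  show "V \<subseteq> set xs"
  proof
    fix v assume "v \<in> V"
    moreover have "xs ! 0 \<in> V" using path L_pos unfolding simple_path_def by auto
    ultimately obtain m ys where ys: "length ys = Suc m" "ys ! 0 = xs ! 0" "ys ! m = v"
      "\<forall>i<m. adj E (ys ! i) (ys ! Suc i)"
      using connected unfolding connected_graph_def walk_len_def by blast
    have "ys ! i \<in> set xs" if "i \<le> m" for i
      using that
    proof (induction i)
      case (Suc i)
      then obtain k where k: "k < L" "ys ! i = xs ! k" by (auto simp: in_set_conv_nth)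
      have "adj E (ys ! i) (ys ! Suc i)" using ys(4) Suc.prems by simp
      then show ?case using adj_in_set k by simp
    qed (use ys L_pos in simp)
    then show "v \<in> set xs" using ys by auto
  qed
qed

lemma adj_nth_cases:
  assumes "i < j" "j < L" "adj E (xs ! i) (xs ! j)"
  shows "j = Suc i \<or> (i = 0 \<and> j = L - 1)"
proof (rule ccontr)
  assume "\<not> ?thesis"
  then consider "0 < i" "Suc i < j" | "i = 0" "Suc 0 < j" "Suc j < L"
    using assms(1,2) by linarith
  then show False
  proof cases
    case 1
    then have "xs ! j = xs ! (i - 1) \<or> xs ! j = xs ! Suc i"
      using adj_inner[OF _ _ assms(3)] assms(2) by simp
    moreover have "xs ! j \<noteq> xs ! (i - 1)" "xs ! j \<noteq> xs ! Suc i"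
      using nth_eq_iff[of j "i - 1"] nth_eq_iff[of j "Suc i"] 1 assms(2) by simp_all
    ultimately show False by blast
  next
    case 2
    have "adj E (xs ! j) (xs ! i)" using assms(3) adj_sym by metis
    then have "xs ! i = xs ! (j - 1) \<or> xs ! i = xs ! Suc j"
      using adj_inner[of j] 2 by simp
    moreover have "xs ! i \<noteq> xs ! (j - 1)" "xs ! i \<noteq> xs ! Suc j"
      using nth_eq_iff[of i "j - 1"] nth_eq_iff[of i "Suc j"] 2 L_pos by simp_all
    ultimately show False by blast
  qed
qed

lemma edge_cases:
  assumes "e \<in> E"
  obtains i j where "i < j" "j < L" "e = {xs ! i, xs ! j}" "j = Suc i \<or> (i = 0 \<and> j = L - 1)"
proof -
  obtain a b where ab: "e = {a, b}" "a \<noteq> b" "a \<in> set xs" "b \<in> set xs"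
    using simple assms set_eq_V unfolding simple_graph_def by blast
  then obtain i j where ij: "i < L" "j < L" "a = xs ! i" "b = xs ! j"
    by (auto simp: in_set_conv_nth)
  have adj: "adj E (xs ! i) (xs ! j)" using assms ab ij unfolding adj_def by simp
  consider "i < j" | "j < i" using ab(2) ij(3,4) by (metis nat_neq_iff)
  then show ?thesis
  proof cases
    case 1
    then show ?thesis using that[OF 1 ij(2)] adj_nth_cases[OF 1 ij(2) adj] ab ij by simp
  next
    case 2
    have "adj E (xs ! j) (xs ! i)" using adj adj_sym by metis
    then show ?thesis
      using that[OF 2 ij(1)] adj_nth_cases[OF 2 ij(1)] ab ij by (simp add: insert_commute)
  qed
qed

lemma bij_nth: "bij_betw ((!) xs) {0..<L} V"
  using bij_betw_nth[OF _ _ set_eq_V[symmetric]] path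
  unfolding simple_path_def by (simp add: atLeast0LessThan)

lemma card_V: "card V = L"
  using distinct_card[of xs] set_eq_V path unfolding simple_path_def by simp

lemma E_eq_cycle:
  assumes "3 \<le> L" "adj E (xs ! 0) (xs ! (L - 1))"
  shows "E = {{xs ! i, xs ! ((i + 1) mod L)} | i. i < L}"
proof
  have "L - 1 + 1 = L" "L - 1 < L" using assms(1) by linarith+
  then have wrap: "(L - 1 + 1) mod L = 0" and last: "L - 1 < L" by simp_all
  show "E \<subseteq> {{xs ! i, xs ! ((i + 1) mod L)} | i. i < L}"
  proof
    fix e assume "e \<in> E"
    then obtain i j where ij: "i < j" "j < L" "e = {xs ! i, xs ! j}" "j = Suc i \<or> (i = 0 \<and> j = L - 1)"
      by (rule edge_cases)
    show "e \<in> {{xs ! i, xs ! ((i + 1) mod L)} | i. i < L}"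
    proof (cases "j = Suc i")
      case True
      then have "e = {xs ! i, xs ! ((i + 1) mod L)}" "i < L" using ij(2,3) by simp_all
      then show ?thesis by (intro CollectI exI[of _ i] conjI)
    next
      case False
      then have "i = 0" "j = L - 1" using ij(4) by auto
      then have "e = {xs ! (L - 1), xs ! 0}"
        using ij(3) insert_commute[of "xs ! 0" "xs ! (L - 1)" "{}"] by simp
      then have "e = {xs ! (L - 1), xs ! ((L - 1 + 1) mod L)}" unfolding wrap .
      then show ?thesis using last by (intro CollectI exI[of _ "L - 1"] conjI)
    qed
  qed
  have "{xs ! i, xs ! ((i + 1) mod L)} \<in> E" if "i < L" for i
  proof (cases "i + 1 < L")
    case True
    then show ?thesis using adj_nth_Suc[of i] unfolding adj_def by simp
  next
    case False
    then have "i = L - 1" using that by simp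
    then have "{xs ! i, xs ! ((i + 1) mod L)} = {xs ! (L - 1), xs ! 0}" using wrap by simp
    then show ?thesis using assms(2) adj_sym[of E "xs ! 0"] unfolding adj_def by simp
  qed
  then show "{{xs ! i, xs ! ((i + 1) mod L)} | i. i < L} \<subseteq> E" by blast
qed

lemma E_eq_path:
  assumes "\<not> adj E (xs ! 0) (xs ! (L - 1))"
  shows "E = {{xs ! i, xs ! (i + 1)} | i. i + 1 < L}"
proof
  show "E \<subseteq> {{xs ! i, xs ! (i + 1)} | i. i + 1 < L}"
  proof
    fix e assume "e \<in> E"
    then obtain i j where ij: "i < j" "j < L" "e = {xs ! i, xs ! j}" "j = Suc i \<or> (i = 0 \<and> j = L - 1)"
      by (rule edge_cases)
    have "j = Suc i"
    proof (rule ccontr)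
      assume "j \<noteq> Suc i"
      then have "e = {xs ! 0, xs ! (L - 1)}" using ij by auto
      then show False using \<open>e \<in> E\<close> assms unfolding adj_def by simp
    qed
    then have "e = {xs ! i, xs ! (i + 1)}" "i + 1 < L" using ij(2,3) by simp_all
    then show "e \<in> {{xs ! i, xs ! (i + 1)} | i. i + 1 < L}" by (intro CollectI exI[of _ i] conjI)
  qed
  show "{{xs ! i, xs ! (i + 1)} | i. i + 1 < L} \<subseteq> E"
    using adj_nth_Suc unfolding adj_def by auto
qed

lemma cycle_or_path:
  assumes "3 \<le> card V"
  shows "is_cycle_graph V E L \<or> (3 \<le> L \<and> is_path_graph V E L)"
proof (cases "adj E (xs ! 0) (xs ! (L - 1))")
  case True
  then show ?thesis
    using E_eq_cycle bij_nth assms card_V unfolding is_cycle_graph_def by auto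
next
  case False
  then show ?thesis
    using E_eq_path bij_nth assms card_V unfolding is_path_graph_def by auto
qed

end

lemma degree_at_most_two_cycle_or_path:
  assumes "simple_graph V E" "connected_graph V E" "degree_at_most_two E" "3 \<le> card V"
  shows "(\<exists>n. is_cycle_graph V E n) \<or> (\<exists>n. 3 \<le> n \<and> is_path_graph V E n)"
proof -
  obtain v where "v \<in> V" using assms(2) unfolding connected_graph_def by auto
  moreover have "finite V" using assms(1) unfolding simple_graph_def by simp
  ultimately obtain xs where "longest_path V E xs"
    using ex_longest_simple_path[of V v E] assms(1-3) unfolding longest_path_def by blast
  then show ?thesis using longest_path.cycle_or_path assms(4) by blast
qed

theorem theorem6:
  fixes V :: "'a set" and E :: "'a set set"
  assumes "simple_graph V E" and "connected_graph V E"
  shows "res_wt V E = 3 \<longleftrightarrow>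
           ((\<exists>n. odd n \<and> is_cycle_graph V E n) \<or> (\<exists>n. n \<ge> 3 \<and> is_path_graph V E n))"
proof
  assume "res_wt V E = 3"
  then have pr: "pair_resolving V E" and "3 \<le> card V" using res_wt_eq_3D[OF assms] by auto
  then have "(\<exists>n. is_cycle_graph V E n) \<or> (\<exists>n. 3 \<le> n \<and> is_path_graph V E n)"
    using degree_at_most_two_cycle_or_path pair_resolving_degree_at_most_two assms by blast
  moreover have "odd n" if "is_cycle_graph V E n" for n
    using is_cycle_graph_enumeration[OF that] cycle_enumeration.pair_resolving_iff_odd pr by blast
  ultimately show "(\<exists>n. odd n \<and> is_cycle_graph V E n) \<or> (\<exists>n. n \<ge> 3 \<and> is_path_graph V E n)"
    by blast
next
  assume "(\<exists>n. odd n \<and> is_cycle_graph V E n) \<or> (\<exists>n. n \<ge> 3 \<and> is_path_graph V E n)"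
  then show "res_wt V E = 3"
    using is_cycle_graph_enumeration is_path_graph_enumeration
      cycle_enumeration.res_wt_eq_3[OF _ assms] path_enumeration.res_wt_eq_3[OF _ assms] by metis
qed

end
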